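(* Let $H=(V,E)$ be a $3$-uniform hypergraph in which every vertex has even degree, and let $G=\mathcal G(H)$ be its incidence graph. The following are equivalent: (1) $H$ is quasi-eulerian; (2) $G$ has a spanning subgraph in which every v-vertex has even degree and every e-vertex has degree exactly $1$; (3) $E$ can be partitioned into pairs $\{e,e'\}$ of distinct edges with $e\cap e'\ne\emptyset$.
   Context: A hypergraph $H=(V,E)$ consists of a finite nonempty vertex set $V$, a finite edge set $E$ disjoint from $V$, and an incidence function assigning to each edge $e\in E$ a subset of $V$ (also denoted $e$); distinct edges may have the same vertex set. $H$ is $3$-uniform if $|e|=3$ for all $e\in E$. The degree of a vertex is the number of edges containing it. A walk is a sequence $W=v_0e_1v_1e_2\cdots e_kv_k$ with $v_i\in V$, $e_i\in E$, such that for each $i$, $v_{i-1}\ne v_i$ and $v_{i-1},v_i\in e_i$; the $v_i$ are its anchors. $W$ is closed if $k\ge 2$ and $v_0=v_k$; it is a strict trail if $e_1,\dots,e_k$ are pairwise distinct. An Euler family of $H$ is a family of closed strict trails such that every edge of $H$ lies in exactly one trail and no two trails have a common anchor; $H$ is quasi-eulerian if it has one. The incidence graph $\mathcal G(H)$ is the simple bipartite graph with vertex set $V\cup E$ in which $v\in V$ and $e\in E$ are adjacent iff $v\in e$; vertices in $V$ are v-vertices and those in $E$ e-vertices. *)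

theory Defs
  imports Main "HOL-Library.Disjoint_Sets"
begin

text \<open>A hypergraph is given by a vertex set V, an edge set E (of a different type, hence
disjoint from V) and an incidence function inc assigning to each edge its vertex set.\<close>

definition hypergraph :: "'v set \<Rightarrow> 'e set \<Rightarrow> ('e \<Rightarrow> 'v set) \<Rightarrow> bool" where
  "hypergraph V E inc \<longleftrightarrow> finite V \<and> V \<noteq> {} \<and> finite E \<and> (\<forall>e\<in>E. inc e \<subseteq> V)"

definition uniform3 :: "'e set \<Rightarrow> ('e \<Rightarrow> 'v set) \<Rightarrow> bool" where
  "uniform3 E inc \<longleftrightarrow> (\<forall>e\<in>E. card (inc e) = 3)"

definition hdegree :: "'e set \<Rightarrow> ('e \<Rightarrow> 'v set) \<Rightarrow> 'v \<Rightarrow> nat" where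
  "hdegree E inc v = card {e\<in>E. v \<in> inc e}"

text \<open>A walk v0 e1 v1 ... ek vk is represented by the anchor list vs = [v0,...,vk]
and the edge list es = [e1,...,ek].\<close>

definition is_walk :: "'v set \<Rightarrow> 'e set \<Rightarrow> ('e \<Rightarrow> 'v set) \<Rightarrow> 'v list \<Rightarrow> 'e list \<Rightarrow> bool" where
  "is_walk V E inc vs es \<longleftrightarrow>
     length vs = Suc (length es) \<and> set vs \<subseteq> V \<and> set es \<subseteq> E \<and>
     (\<forall>i < length es. vs ! i \<noteq> vs ! Suc i \<and> vs ! i \<in> inc (es ! i) \<and> vs ! Suc i \<in> inc (es ! i))"

definition closed_strict_trail ::
  "'v set \<Rightarrow> 'e set \<Rightarrow> ('e \<Rightarrow> 'v set) \<Rightarrow> 'v list \<Rightarrow> 'e list \<Rightarrow> bool" where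
  "closed_strict_trail V E inc vs es \<longleftrightarrow>
     is_walk V E inc vs es \<and> length es \<ge> 2 \<and> hd vs = last vs \<and> distinct es"

definition euler_family ::
  "'v set \<Rightarrow> 'e set \<Rightarrow> ('e \<Rightarrow> 'v set) \<Rightarrow> ('v list \<times> 'e list) set \<Rightarrow> bool" where
  "euler_family V E inc F \<longleftrightarrow>
     (\<forall>T\<in>F. closed_strict_trail V E inc (fst T) (snd T)) \<and>
     (\<forall>e\<in>E. \<exists>!T. T \<in> F \<and> e \<in> set (snd T)) \<and>
     (\<forall>T\<in>F. \<forall>T'\<in>F. T \<noteq> T' \<longrightarrow> set (fst T) \<inter> set (fst T') = {})"

definition quasi_eulerian :: "'v set \<Rightarrow> 'e set \<Rightarrow> ('e \<Rightarrow> 'v set) \<Rightarrow> bool" where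
  "quasi_eulerian V E inc \<longleftrightarrow> (\<exists>F. euler_family V E inc F)"

text \<open>Incidence graph: bipartite graph on V + E; its edge set is represented as the set of
incident pairs (v,e). A spanning subgraph is given by a subset of these pairs.\<close>

definition incidence_edges :: "'v set \<Rightarrow> 'e set \<Rightarrow> ('e \<Rightarrow> 'v set) \<Rightarrow> ('v \<times> 'e) set" where
  "incidence_edges V E inc = {(v, e). v \<in> V \<and> e \<in> E \<and> v \<in> inc e}"

definition even_one_factor_subgraph ::
  "'v set \<Rightarrow> 'e set \<Rightarrow> ('e \<Rightarrow> 'v set) \<Rightarrow> ('v \<times> 'e) set \<Rightarrow> bool" where
  "even_one_factor_subgraph V E inc S \<longleftrightarrow>
     S \<subseteq> incidence_edges V E inc \<and>
     (\<forall>v\<in>V. even (card {e. (v, e) \<in> S})) \<and>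
     (\<forall>e\<in>E. card {v. (v, e) \<in> S} = 1)"

definition intersecting_pair_partition ::
  "'e set \<Rightarrow> ('e \<Rightarrow> 'v set) \<Rightarrow> 'e set set \<Rightarrow> bool" where
  "intersecting_pair_partition E inc P \<longleftrightarrow>
     partition_on E P \<and>
     (\<forall>p\<in>P. \<exists>e e'. p = {e, e'} \<and> e \<noteq> e' \<and> inc e \<inter> inc e' \<noteq> {})"

end

theory Submission
  imports Defs
begin

text \<open>Keeping, for every edge of an Euler family, only the two anchors between which it is traversed
  yields a multigraph in which all degrees are even. Conversely, a multigraph with even degrees
  decomposes into closed trails, and a decomposition with fewest trails has pairwise anchor-disjoint
  trails. So \<open>H\<close> is quasi-eulerian iff two vertices of every edge can be selected so that each vertex
  is selected an even number of times. For a 3-uniform \<open>H\<close> this amounts to choosing the third vertex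
  of every edge, and as all degrees are even, the selections at a vertex are even in number iff the
  choices are. Such a choice is (2); pairing up the edges that choose the same vertex gives (3),
  and the common vertex of each pair is a choice.\<close>

section \<open>Walks\<close>

fun walk :: "('e \<Rightarrow> 'v set) \<Rightarrow> 'v list \<Rightarrow> 'e list \<Rightarrow> bool" where
  "walk D [v] [] \<longleftrightarrow> True"
| "walk D (v # w # vs) (e # es) \<longleftrightarrow> v \<noteq> w \<and> v \<in> D e \<and> w \<in> D e \<and> walk D (w # vs) es"
| "walk D _ _ \<longleftrightarrow> False"

lemma walk_iff_nth:
  "walk D vs es \<longleftrightarrow> length vs = Suc (length es) \<and>
     (\<forall>i<length es. vs ! i \<noteq> vs ! Suc i \<and> vs ! i \<in> D (es ! i) \<and> vs ! Suc i \<in> D (es ! i))"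
proof (induction D vs es rule: walk.induct)
  case (2 D v w vs e es)
  then show ?case
    by (simp only: walk.simps length_Cons All_less_Suc2 nth_Cons_0 nth_Cons_Suc Suc_inject) blast
qed (auto simp: less_Suc_eq_0_disj)

lemma is_walk_iff_walk:
  "is_walk V E D vs es \<longleftrightarrow> walk D vs es \<and> set vs \<subseteq> V \<and> set es \<subseteq> E"
  unfolding is_walk_def walk_iff_nth by blast

lemma closed_strict_trail_iff_walk:
  "closed_strict_trail V E D vs es \<longleftrightarrow>
     walk D vs es \<and> set vs \<subseteq> V \<and> set es \<subseteq> E \<and> 2 \<le> length es \<and> hd vs = last vs \<and> distinct es"
  unfolding closed_strict_trail_def is_walk_iff_walk by blast

lemma walk_not_Nil: "walk D vs es \<Longrightarrow> vs \<noteq> []"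
  by (induction D vs es rule: walk.induct) auto

lemma walk_length: "walk D vs es \<Longrightarrow> length vs = Suc (length es)"
  by (simp add: walk_iff_nth)

lemma walk_mono: "walk D vs es \<Longrightarrow> (\<And>e. e \<in> set es \<Longrightarrow> D e \<subseteq> D' e) \<Longrightarrow> walk D' vs es"
  by (induction D vs es rule: walk.induct) auto

lemma walk_append:
  "walk D xs es \<Longrightarrow> walk D ys fs \<Longrightarrow> last xs = hd ys \<Longrightarrow> walk D (xs @ tl ys) (es @ fs)"
proof (induction D xs es rule: walk.induct)
  case (1 D v)
  then show ?case using walk_not_Nil[of D ys fs] by (cases ys) auto
qed auto

lemma walk_split:
  assumes "walk D vs es" and "x \<in> set vs"
  shows "\<exists>p q es1 es2. vs = p @ x # q \<and> es = es1 @ es2 \<and> walk D (p @ [x]) es1 \<and> walk D (x # q) es2"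
  using assms
proof (induction D vs es rule: walk.induct)
  case (1 D v)
  then show ?case by (intro exI[of _ "[]"]) auto
next
  case (2 D v w vs e es)
  show ?case
  proof (cases "x = v")
    case True
    with "2.prems" show ?thesis by (intro exI[of _ "[]"] exI[of _ "w # vs"] exI[of _ "[]"] exI[of _ "e # es"]) auto
  next
    case False
    with 2 obtain p q es1 es2 where
      "w # vs = p @ x # q" "es = es1 @ es2" "walk D (p @ [x]) es1" "walk D (x # q) es2"
      by auto
    moreover from this "2.prems" have "walk D (v # p @ [x]) (e # es1)" by (cases p) auto
    ultimately show ?thesis by (intro exI[of _ "v # p"] exI[of _ q] exI[of _ "e # es1"] exI[of _ es2]) auto
  qed
qed auto

lemma walk_vertices_subset: "walk D vs es \<Longrightarrow> es \<noteq> [] \<Longrightarrow> set vs \<subseteq> \<Union>(D ` set es)"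
proof (induction D vs es rule: walk.induct)
  case (2 D v w vs e es)
  then show ?case by (cases es) (auto elim: walk.elims)
qed auto

lemma card_2_doubleton: "card X = 2 \<Longrightarrow> a \<in> X \<Longrightarrow> b \<in> X \<Longrightarrow> a \<noteq> b \<Longrightarrow> X = {a, b}"
  by (metis card_2_iff doubleton_eq_iff insertE singletonD)

lemma walk_edge_subset_vertices:
  "walk D vs es \<Longrightarrow> (\<And>e. e \<in> set es \<Longrightarrow> card (D e) = 2) \<Longrightarrow> e \<in> set es \<Longrightarrow> D e \<subseteq> set vs"
proof (induction D vs es rule: walk.induct)
  case (2 D v w vs e' es)
  then have "D e' = {v, w}"
    using card_2_doubleton[of "D e'" v w] by simp
  with 2 show ?case by auto
qed auto

lemma path_first_edge:
  assumes "walk D vs es" "distinct vs" "\<And>e. e \<in> set es \<Longrightarrow> card (D e) = 2"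
    and "e \<in> set es" "hd vs \<in> D e"
  shows "e = hd es"
  using assms
proof (induction D vs es rule: walk.induct)
  case (2 D v w vs e' es)
  show ?case
  proof (rule ccontr)
    assume "e \<noteq> hd (e' # es)"
    with "2.prems" have "D e \<subseteq> set (w # vs)"
      by (intro walk_edge_subset_vertices[of D _ es]) auto
    with "2.prems" show False by auto
  qed
qed auto

section \<open>Closed trails\<close>

lemma walk_incident_edges_count:
  "walk D vs es \<Longrightarrow> (\<And>e. e \<in> set es \<Longrightarrow> card (D e) = 2) \<Longrightarrow>
   length (filter (\<lambda>e. v \<in> D e) es) = count_list (butlast vs) v + count_list (tl vs) v"
proof (induction D vs es rule: walk.induct)
  case (2 D u w vs e es)
  then have "D e = {u, w}" using card_2_doubleton[of "D e" u w] by simp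
  with 2 show ?case by (cases vs) auto
qed auto

lemma count_list_butlast_eq_tl:
  assumes "vs \<noteq> []" "hd vs = last vs"
  shows "count_list (butlast vs) v = count_list (tl vs) v"
proof (cases vs)
  case (Cons a ws)
  show ?thesis
  proof (cases "ws = []")
    case False
    then have "ws = butlast ws @ [a]" using assms(2) Cons by simp
    then have "vs = a # butlast ws @ [a]" using Cons by simp
    then show ?thesis by (simp add: add.commute)
  qed (use Cons in simp)
qed (use assms in simp)

text \<open>A closed walk enters every anchor as often as it leaves it.\<close>

lemma closed_walk_even_degree:
  assumes "walk D vs es" "\<And>e. e \<in> set es \<Longrightarrow> card (D e) = 2" "hd vs = last vs" "distinct es"
  shows "even (card {e \<in> set es. v \<in> D e})"
proof -
  have "card {e \<in> set es. v \<in> D e} = length (filter (\<lambda>e. v \<in> D e) es)"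
    using \<open>distinct es\<close> by (metis distinct_card distinct_filter set_filter)
  also have "\<dots> = 2 * count_list (tl vs) v"
    using walk_incident_edges_count[OF assms(1,2)] count_list_butlast_eq_tl[OF walk_not_Nil[OF assms(1)] assms(3)]
    by simp
  finally show ?thesis by simp
qed

lemma last_append_tl: "ys \<noteq> [] \<Longrightarrow> last xs = hd ys \<Longrightarrow> last (xs @ tl ys) = last ys"
  by (cases ys) auto

lemma set_append_tl: "xs \<noteq> [] \<Longrightarrow> ys \<noteq> [] \<Longrightarrow> last xs = hd ys \<Longrightarrow> set (xs @ tl ys) = set xs \<union> set ys"
  by (cases ys) auto

lemma closed_trail_rotate:
  assumes trail: "closed_strict_trail V E D vs es" and x: "x \<in> set vs"
  shows "\<exists>vs' es'. closed_strict_trail V E D vs' es' \<and> hd vs' = x \<and> set vs' = set vs \<and> set es' = set es"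
proof -
  note T = trail[unfolded closed_strict_trail_iff_walk]
  obtain r s es1 es2 where split: "vs = r @ x # s" "es = es1 @ es2"
    and W1: "walk D (r @ [x]) es1" and W2: "walk D (x # s) es2"
    using walk_split[OF _ x] T by blast
  have join: "last (x # s) = hd (r @ [x])" using T split(1) by (cases r) auto
  define vs' where "vs' = (x # s) @ tl (r @ [x])"
  have "walk D vs' (es2 @ es1)" unfolding vs'_def using walk_append[OF W2 W1 join] .
  moreover have "hd vs' = x" "last vs' = x" unfolding vs'_def using last_append_tl[OF _ join] by auto
  moreover have "set vs' = set vs" unfolding vs'_def using set_append_tl[OF _ _ join] split(1) by auto
  ultimately show ?thesis using T split(2)
    by (intro exI[of _ vs'] exI[of _ "es2 @ es1"]) (auto simp: closed_strict_trail_iff_walk)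
qed

lemma closed_trail_splice:
  assumes "closed_strict_trail V E D vs es" "closed_strict_trail V E D ws fs"
    and "x \<in> set vs" "x \<in> set ws" "set es \<inter> set fs = {}"
  shows "\<exists>us gs. closed_strict_trail V E D us gs \<and> set us = set vs \<union> set ws \<and> set gs = set es \<union> set fs"
proof -
  obtain vs' es' where T1: "closed_strict_trail V E D vs' es'" "hd vs' = x" "set vs' = set vs" "set es' = set es"
    using closed_trail_rotate[OF assms(1,3)] by blast
  obtain ws' fs' where T2: "closed_strict_trail V E D ws' fs'" "hd ws' = x" "set ws' = set ws" "set fs' = set fs"
    using closed_trail_rotate[OF assms(2,4)] by blast
  note W1 = T1(1)[unfolded closed_strict_trail_iff_walk] and W2 = T2(1)[unfolded closed_strict_trail_iff_walk]
  have join: "last vs' = hd ws'" using W1 T1(2) T2(2) by simp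
  have ne: "vs' \<noteq> []" "ws' \<noteq> []" using W1 W2 walk_not_Nil by blast+
  have "walk D (vs' @ tl ws') (es' @ fs')" using walk_append W1 W2 join by blast
  moreover have "hd (vs' @ tl ws') = last (vs' @ tl ws')"
    using last_append_tl[OF ne(2) join] join ne W1 W2 by simp
  moreover have "distinct (es' @ fs')" using W1 W2 T1(4) T2(4) assms(5) by simp
  moreover have "set (vs' @ tl ws') = set vs \<union> set ws"
    using set_append_tl[OF ne join] T1(3) T2(3) by simp
  ultimately show ?thesis
    using W1 W2 T1(3,4) T2(3,4) unfolding closed_strict_trail_iff_walk
    by (intro exI[of _ "vs' @ tl ws'"] exI[of _ "es' @ fs'"]) auto
qed

lemma path_chord_closes:
  assumes "walk D vs es" "f \<notin> set es" "hd vs \<in> D f" "w \<in> D f" "w \<noteq> hd vs" "w \<in> set vs"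
  shows "\<exists>us gs. walk D us gs \<and> hd us = last us \<and> set gs \<subseteq> insert f (set es) \<and> 2 \<le> length gs \<and>
    (distinct es \<longrightarrow> distinct gs)"
proof -
  obtain p q es1 es2 where split: "vs = p @ w # q" "es = es1 @ es2" and W: "walk D (p @ [w]) es1"
    using walk_split[OF assms(1,6)] by blast
  obtain p' where p: "p = hd vs # p'" using split(1) assms(5) by (cases p) auto
  have "walk D (w # p @ [w]) (f # es1)" using W p assms(3-5) by simp
  moreover have "1 \<le> length es1" using walk_length[OF W] p by simp
  ultimately show ?thesis using split(2) assms(2) by (intro exI[of _ "w # p @ [w]"] exI[of _ "f # es1"]) auto
qed

text \<open>A longest path cannot be extended at its first anchor; as that anchor has even, hence
  second, degree, the extra edge closes a cycle.\<close>

lemma closed_trail_exists: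
  assumes fin: "finite E" and ne: "E \<noteq> {}" and card2: "\<forall>e\<in>E. card (D e) = 2" and sub: "\<forall>e\<in>E. D e \<subseteq> V"
    and even: "\<forall>v. even (card {e \<in> E. v \<in> D e})"
  shows "\<exists>vs es. closed_strict_trail V E D vs es"
proof -
  define path where "path = (\<lambda>(vs, es). walk D vs es \<and> distinct vs \<and> distinct es \<and> set es \<subseteq> E \<and> es \<noteq> [])"
  obtain e a b where "e \<in> E" "D e = {a, b}" "a \<noteq> b" using ne card2 card_2_iff by (metis ex_in_conv)
  then have "path ([a, b], [e])" unfolding path_def by auto
  moreover have "length (snd P) < Suc (card E)" if "path P" for P
    using that fin card_mono[of E "set (snd P)"] distinct_card[of "snd P"] unfolding path_def by auto
  ultimately obtain vs es where P: "path (vs, es)" and longest: "\<And>P. path P \<Longrightarrow> length (snd P) \<le> length es"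
    using ex_has_greatest_nat[of path _ "\<lambda>P. length (snd P)"] by (metis prod.collapse snd_conv)
  then have W: "walk D vs es" "distinct vs" "distinct es" "set es \<subseteq> E" "es \<noteq> []"
    unfolding path_def by auto
  have "hd vs \<in> D (hd es)" using W(1,5) walk_not_Nil[OF W(1)] unfolding walk_iff_nth by (simp add: hd_conv_nth)
  moreover have "hd es \<in> E" using W(4,5) by auto
  moreover have "{e \<in> E. hd vs \<in> D e} \<noteq> {hd es}"
  proof
    assume "{e \<in> E. hd vs \<in> D e} = {hd es}"
    with even[rule_format, of "hd vs"] show False by simp
  qed
  ultimately obtain f where f: "f \<in> E" "hd vs \<in> D f" "f \<noteq> hd es" by blast
  obtain w where w: "w \<in> D f" "w \<noteq> hd vs"
    using card2 f(1) by (metis card_2_iff insert_iff)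
  have "f \<notin> set es" using path_first_edge[OF W(1,2)] card2 W(4) f by blast
  moreover have "w \<in> set vs"
  proof (rule ccontr)
    assume "w \<notin> set vs"
    then have "path (w # vs, f # es)"
      using W f w \<open>f \<notin> set es\<close> walk_not_Nil[OF W(1)] unfolding path_def by (cases vs) auto
    then show False using longest by fastforce
  qed
  ultimately obtain us gs where C: "walk D us gs" "hd us = last us" "set gs \<subseteq> E" "2 \<le> length gs" "distinct gs"
    using path_chord_closes[OF W(1) _ f(2) w] W(3,4) f(1) by blast
  moreover have "set us \<subseteq> V" using walk_vertices_subset[OF C(1)] C(3,4) sub by fastforce
  ultimately show ?thesis unfolding closed_strict_trail_iff_walk by blast
qed

section \<open>Decompositions into closed trails\<close>

lemma even_card_Diff:
  assumes "finite B" "A \<subseteq> B" "even (card A)" "even (card B)"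
  shows "even (card (B - A))"
  using assms by (simp add: card_Diff_subset finite_subset card_mono)

lemma closed_strict_trail_mono:
  "closed_strict_trail V E' D vs es \<Longrightarrow> E' \<subseteq> E \<Longrightarrow> closed_strict_trail V E D vs es"
  unfolding closed_strict_trail_iff_walk by blast

definition trail_decomposition ::
  "'v set \<Rightarrow> 'e set \<Rightarrow> ('e \<Rightarrow> 'v set) \<Rightarrow> ('v list \<times> 'e list) set \<Rightarrow> bool" where
  "trail_decomposition V E D F \<longleftrightarrow>
     (\<forall>T\<in>F. closed_strict_trail V E D (fst T) (snd T)) \<and> (\<forall>e\<in>E. \<exists>!T. T \<in> F \<and> e \<in> set (snd T))"

lemma euler_family_iff_trail_decomposition:
  "euler_family V E D F \<longleftrightarrow>
     trail_decomposition V E D F \<and> (\<forall>T\<in>F. \<forall>T'\<in>F. T \<noteq> T' \<longrightarrow> set (fst T) \<inter> set (fst T') = {})"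
  unfolding euler_family_def trail_decomposition_def by (simp only: conj_assoc)

lemma trail_decomposition_edges_disjoint:
  assumes "trail_decomposition V E D F" "T \<in> F" "T' \<in> F" "T \<noteq> T'"
  shows "set (snd T) \<inter> set (snd T') = {}"
proof -
  have "e \<in> E" if "e \<in> set (snd T)" for e
    using assms(1,2) that unfolding trail_decomposition_def closed_strict_trail_iff_walk by blast
  then show ?thesis using assms unfolding trail_decomposition_def by blast
qed

lemma trail_decomposition_finite:
  assumes "finite E" "trail_decomposition V E D F"
  shows "finite F"
proof (rule finite_surj[OF assms(1)])
  show "F \<subseteq> (\<lambda>e. THE T. T \<in> F \<and> e \<in> set (snd T)) ` E"
  proof
    fix T assume T: "T \<in> F"
    then have "snd T \<noteq> []" "set (snd T) \<subseteq> E"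
      using assms(2) unfolding trail_decomposition_def closed_strict_trail_iff_walk by auto
    then obtain e where e: "e \<in> E" "e \<in> set (snd T)" by (cases "snd T") auto
    then have "\<exists>!T. T \<in> F \<and> e \<in> set (snd T)" using assms(2) unfolding trail_decomposition_def by blast
    then have "(THE T. T \<in> F \<and> e \<in> set (snd T)) = T" by (rule the1_equality) (use T e(2) in blast)
    with e(1) show "T \<in> (\<lambda>e. THE T. T \<in> F \<and> e \<in> set (snd T)) ` E" by force
  qed
qed

lemma trail_decomposition_insert:
  assumes F: "trail_decomposition V (E - set es) D F" and C: "closed_strict_trail V E D vs es"
  shows "trail_decomposition V E D (insert (vs, es) F)"
proof -
  have edges_F: "set (snd T) \<subseteq> E - set es" if "T \<in> F" for T
    using F that unfolding trail_decomposition_def closed_strict_trail_iff_walk by blast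
  have "\<forall>T\<in>insert (vs, es) F. closed_strict_trail V E D (fst T) (snd T)"
    using C F closed_strict_trail_mono[of V "E - set es" D _ _ E] unfolding trail_decomposition_def by auto
  moreover have "\<exists>!T. T \<in> insert (vs, es) F \<and> e \<in> set (snd T)" if "e \<in> E" for e
  proof (cases "e \<in> set es")
    case True
    show ?thesis
    proof (rule ex1I[of _ "(vs, es)"])
      fix T assume "T \<in> insert (vs, es) F \<and> e \<in> set (snd T)"
      with True edges_F show "T = (vs, es)" by blast
    qed (use True in simp)
  next
    case False
    then obtain T0 where T0: "T0 \<in> F" "e \<in> set (snd T0)"
      and unique: "\<And>T. T \<in> F \<Longrightarrow> e \<in> set (snd T) \<Longrightarrow> T = T0"
      using F \<open>e \<in> E\<close> unfolding trail_decomposition_def by (metis Diff_iff)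
    show ?thesis
    proof (rule ex1I[of _ T0])
      fix T assume "T \<in> insert (vs, es) F \<and> e \<in> set (snd T)"
      with False unique show "T = T0" by (metis insertE snd_conv)
    qed (use T0 in simp)
  qed
  ultimately show ?thesis unfolding trail_decomposition_def by blast
qed

lemma trail_decomposition_exists:
  assumes "finite E" "\<forall>e\<in>E. card (D e) = 2" "\<forall>e\<in>E. D e \<subseteq> V" "\<forall>v. even (card {e \<in> E. v \<in> D e})"
  shows "\<exists>F. trail_decomposition V E D F"
  using assms
proof (induction "card E" arbitrary: E rule: less_induct)
  case less
  show ?case
  proof (cases "E = {}")
    case True
    then show ?thesis by (auto simp: trail_decomposition_def)
  next
    case False
    then obtain vs es where C: "closed_strict_trail V E D vs es"
      using closed_trail_exists[OF less.prems(1) False less.prems(2-4)] by blast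
    then have W: "walk D vs es" "set es \<subseteq> E" "es \<noteq> []" "hd vs = last vs" "distinct es"
      unfolding closed_strict_trail_iff_walk by auto
    have "E - set es \<subset> E" using W(2,3) by (auto simp: neq_Nil_conv)
    then have "card (E - set es) < card E" using psubset_card_mono less.prems(1) by blast
    moreover have "even (card {e \<in> E - set es. v \<in> D e})" for v
    proof -
      have "{e \<in> E - set es. v \<in> D e} = {e \<in> E. v \<in> D e} - {e \<in> set es. v \<in> D e}" by auto
      moreover have "even (card {e \<in> set es. v \<in> D e})"
        using closed_walk_even_degree[OF W(1) _ W(4,5)] W(2) less.prems(2) by blast
      ultimately show ?thesis
        using even_card_Diff[of "{e \<in> E. v \<in> D e}" "{e \<in> set es. v \<in> D e}"] less.prems(1,4) W(2)
        by auto
    qed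
    ultimately obtain F where "trail_decomposition V (E - set es) D F"
      using less.hyps[of "E - set es"] less.prems(1-3) by blast
    then show ?thesis using trail_decomposition_insert C by blast
  qed
qed

lemma trail_decomposition_splice:
  assumes F: "trail_decomposition V E D F" and T: "T \<in> F" "T' \<in> F" "T \<noteq> T'"
    and meet: "set (fst T) \<inter> set (fst T') \<noteq> {}"
  shows "\<exists>C. trail_decomposition V E D (insert C (F - {T, T'}))"
proof -
  have trails: "closed_strict_trail V E D (fst U) (snd U)" if "U \<in> F" for U
    using F that unfolding trail_decomposition_def by blast
  obtain us gs where C: "closed_strict_trail V E D us gs" and gs: "set gs = set (snd T) \<union> set (snd T')"
    using closed_trail_splice[OF trails[OF T(1)] trails[OF T(2)]] meet
      trail_decomposition_edges_disjoint[OF F T] by blast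
  have "\<exists>!U. U \<in> insert (us, gs) (F - {T, T'}) \<and> e \<in> set (snd U)" if "e \<in> E" for e
  proof (cases "e \<in> set gs")
    case True
    then show ?thesis using F T \<open>e \<in> E\<close> gs unfolding trail_decomposition_def by auto
  next
    case False
    then show ?thesis using F \<open>e \<in> E\<close> gs unfolding trail_decomposition_def by auto
  qed
  then show ?thesis using C trails unfolding trail_decomposition_def by (intro exI[of _ "(us, gs)"]) auto
qed

text \<open>A trail decomposition with the fewest trails is an Euler family: two trails with a common
  anchor could be spliced into one.\<close>

theorem euler_family_exists:
  assumes fin: "finite E" and "\<forall>e\<in>E. card (D e) = 2" "\<forall>e\<in>E. D e \<subseteq> V"
    and "\<forall>v. even (card {e \<in> E. v \<in> D e})"
  shows "\<exists>F. euler_family V E D F"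
proof -
  obtain F0 where "trail_decomposition V E D F0" using trail_decomposition_exists[OF assms] ..
  then obtain F where F: "trail_decomposition V E D F"
    and fewest: "\<And>F'. trail_decomposition V E D F' \<Longrightarrow> card F \<le> card F'"
    using ex_has_least_nat[of "trail_decomposition V E D" F0 card] by auto
  have "set (fst T) \<inter> set (fst T') = {}" if T: "T \<in> F" "T' \<in> F" "T \<noteq> T'" for T T'
  proof (rule ccontr)
    assume "set (fst T) \<inter> set (fst T') \<noteq> {}"
    then obtain C where C: "trail_decomposition V E D (insert C (F - {T, T'}))"
      using trail_decomposition_splice[OF F T] by blast
    have "finite F" using trail_decomposition_finite[OF fin F] .
    then have "card (insert C (F - {T, T'})) \<le> Suc (card (F - {T, T'}))" by (simp add: card_insert_if)
    also have "\<dots> = Suc (card F - 2)" using T \<open>finite F\<close> by (simp add: card_Diff_subset)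
    also have "\<dots> < card F" using T \<open>finite F\<close> card_mono[of F "{T, T'}"] by simp
    finally have "card (insert C (F - {T, T'})) < card F" .
    then show False using fewest[OF C] by simp
  qed
  then show ?thesis using F unfolding euler_family_iff_trail_decomposition by blast
qed

section \<open>Euler families of hypergraphs\<close>

lemma euler_family_mono:
  assumes F: "euler_family V E D F" and sub: "\<forall>e\<in>E. D e \<subseteq> inc e"
  shows "euler_family V E inc F"
proof -
  have "closed_strict_trail V E inc (fst T) (snd T)" if "T \<in> F" for T
  proof -
    have "closed_strict_trail V E D (fst T) (snd T)"
      using F[unfolded euler_family_def, THEN conjunct1] that by blast
    then show ?thesis using walk_mono[of D "fst T" "snd T" inc] sub
      unfolding closed_strict_trail_iff_walk by blast
  qed
  with F show ?thesis unfolding euler_family_def by simp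
qed

text \<open>Each edge of an Euler family is traversed exactly once, between two distinct anchors;
  keeping only these two vertices of every edge turns the family into an Euler family of a multigraph.\<close>

lemma euler_family_traversed_pairs:
  assumes F: "euler_family V E inc F"
  shows "\<exists>D. (\<forall>e\<in>E. D e \<subseteq> inc e \<and> card (D e) = 2) \<and> euler_family V E D F"
proof -
  have trail: "walk inc (fst T) (snd T)" "set (snd T) \<subseteq> E" "distinct (snd T)" if "T \<in> F" for T
    using F that unfolding euler_family_def closed_strict_trail_iff_walk by auto
  have unique: "\<forall>e\<in>E. \<exists>!T. T \<in> F \<and> e \<in> set (snd T)" using F unfolding euler_family_def by blast
  define D where "D e = (SOME d. \<exists>T\<in>F. \<exists>i<length (snd T). snd T ! i = e \<and> d = {fst T ! i, fst T ! Suc i})"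
    for e
  have D_nth: "D (snd T ! i) = {fst T ! i, fst T ! Suc i}" if T: "T \<in> F" "i < length (snd T)" for T i
  proof -
    have "\<exists>T'\<in>F. \<exists>j<length (snd T'). snd T' ! j = snd T ! i \<and> D (snd T ! i) = {fst T' ! j, fst T' ! Suc j}"
      unfolding D_def by (rule someI_ex) (use T in blast)
    then obtain T' j where T': "T' \<in> F" "j < length (snd T')" "snd T' ! j = snd T ! i"
      and D: "D (snd T ! i) = {fst T' ! j, fst T' ! Suc j}" by blast
    have "snd T ! i \<in> E" using trail(2)[OF T(1)] T(2) by auto
    then have "T' = T" using unique T T' by (metis nth_mem)
    then have "j = i" using T T' trail(3) nth_eq_iff_index_eq by metis
    with D \<open>T' = T\<close> show ?thesis by simp
  qed
  have walk_D: "walk D (fst T) (snd T)" if "T \<in> F" for T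
    using trail(1)[OF that] D_nth[OF that] unfolding walk_iff_nth by auto
  have "D e \<subseteq> inc e \<and> card (D e) = 2" if "e \<in> E" for e
  proof -
    obtain T i where T: "T \<in> F" "i < length (snd T)" "snd T ! i = e"
      using unique \<open>e \<in> E\<close> by (metis in_set_conv_nth)
    then show ?thesis using D_nth[OF T(1,2)] trail(1)[OF T(1)] unfolding walk_iff_nth by auto
  qed
  moreover have "closed_strict_trail V E D (fst T) (snd T)" if "T \<in> F" for T
    using F[unfolded euler_family_def, THEN conjunct1] that walk_D[OF that]
    unfolding closed_strict_trail_iff_walk by blast
  then have "euler_family V E D F" using F unfolding euler_family_def by simp
  ultimately show ?thesis by blast
qed

lemma euler_family_even_degree:
  assumes F: "euler_family V E D F" and card2: "\<forall>e\<in>E. card (D e) = 2"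
  shows "even (card {e \<in> E. v \<in> D e})"
proof -
  have trail: "walk D (fst T) (snd T)" "set (snd T) \<subseteq> E" "distinct (snd T)" "hd (fst T) = last (fst T)"
    if "T \<in> F" for T
    using F that unfolding euler_family_def closed_strict_trail_iff_walk by auto
  have unique: "\<forall>e\<in>E. \<exists>!T. T \<in> F \<and> e \<in> set (snd T)"
    and disjoint: "\<forall>T\<in>F. \<forall>T'\<in>F. T \<noteq> T' \<longrightarrow> set (fst T) \<inter> set (fst T') = {}"
    using F unfolding euler_family_def by blast+
  have anchors: "D e \<subseteq> set (fst T)" if "T \<in> F" "e \<in> set (snd T)" for T e
    using walk_edge_subset_vertices[OF trail(1)[OF that(1)] _ that(2)] card2 trail(2)[OF that(1)] by blast
  have anchor_of_edge: "\<exists>T\<in>F. v \<in> set (fst T)" if "e \<in> E" "v \<in> D e" for e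
  proof -
    obtain T where "T \<in> F" "e \<in> set (snd T)" using unique \<open>e \<in> E\<close> by (meson ex1_implies_ex)
    then show ?thesis using anchors \<open>v \<in> D e\<close> by blast
  qed
  show ?thesis
  proof (cases "\<exists>T\<in>F. v \<in> set (fst T)")
    case True
    then obtain T where T: "T \<in> F" "v \<in> set (fst T)" by blast
    have "e \<in> set (snd T)" if e: "e \<in> E" "v \<in> D e" for e
    proof -
      obtain T' where T': "T' \<in> F" "e \<in> set (snd T')" using unique e(1) by (meson ex1_implies_ex)
      then have "v \<in> set (fst T')" using anchors e(2) by blast
      then have "T' = T" using disjoint T T' by blast
      with T' show ?thesis by simp
    qed
    then have "{e \<in> E. v \<in> D e} = {e \<in> set (snd T). v \<in> D e}"
      using trail(2)[OF T(1)] by auto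
    moreover have "\<forall>e\<in>set (snd T). card (D e) = 2" using card2 trail(2)[OF T(1)] by blast
    ultimately show ?thesis
      using closed_walk_even_degree[OF trail(1)[OF T(1)] _ trail(4,3)[OF T(1)]] by simp
  next
    case False
    then have "{e \<in> E. v \<in> D e} = {}" using anchor_of_edge by blast
    then show ?thesis by (simp only: card.empty dvd_0_right)
  qed
qed

definition even_pair_selection :: "'e set \<Rightarrow> ('e \<Rightarrow> 'v set) \<Rightarrow> ('e \<Rightarrow> 'v set) \<Rightarrow> bool" where
  "even_pair_selection E inc D \<longleftrightarrow>
     (\<forall>e\<in>E. D e \<subseteq> inc e \<and> card (D e) = 2) \<and> (\<forall>v. even (card {e \<in> E. v \<in> D e}))"

theorem quasi_eulerian_iff_even_pair_selection:
  assumes "finite E" "\<forall>e\<in>E. inc e \<subseteq> V"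
  shows "quasi_eulerian V E inc \<longleftrightarrow> (\<exists>D. even_pair_selection E inc D)"
proof
  assume "quasi_eulerian V E inc"
  then obtain F where "euler_family V E inc F" unfolding quasi_eulerian_def ..
  then obtain D where D: "\<forall>e\<in>E. D e \<subseteq> inc e \<and> card (D e) = 2" "euler_family V E D F"
    using euler_family_traversed_pairs by metis
  then have "even_pair_selection E inc D"
    unfolding even_pair_selection_def using euler_family_even_degree[OF D(2)] by simp
  then show "\<exists>D. even_pair_selection E inc D" by blast
next
  assume "\<exists>D. even_pair_selection E inc D"
  then obtain D where D: "\<forall>e\<in>E. D e \<subseteq> inc e \<and> card (D e) = 2" "\<forall>v. even (card {e \<in> E. v \<in> D e})"
    unfolding even_pair_selection_def by blast
  moreover have "\<forall>e\<in>E. card (D e) = 2" "\<forall>e\<in>E. D e \<subseteq> V" using D(1) assms(2) by blast+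
  ultimately obtain F where "euler_family V E D F" using euler_family_exists[OF assms(1)] by blast
  then have "euler_family V E inc F" using euler_family_mono[of V E D F inc] D(1) by blast
  then show "quasi_eulerian V E inc" unfolding quasi_eulerian_def ..
qed

section \<open>Choosing one vertex of every edge\<close>

lemma partition_on_UN:
  assumes "(\<Union>i\<in>I. A i) = X" "disjoint_family_on A I" "\<And>i. i \<in> I \<Longrightarrow> partition_on (A i) (R i)"
  shows "partition_on X (\<Union>i\<in>I. R i)"
proof (rule partition_onI)
  have "\<Union>(R i) = A i" if "i \<in> I" for i using assms(3)[OF that] partition_onD1 by blast
  then show "\<Union>(\<Union>i\<in>I. R i) = X" using assms(1) by blast
  show "{} \<notin> (\<Union>i\<in>I. R i)" using assms(3) partition_onD3 by blast
  fix p p' assume "p \<in> (\<Union>i\<in>I. R i)" "p' \<in> (\<Union>i\<in>I. R i)" "p \<noteq> p'"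
  then obtain i j where i: "i \<in> I" "p \<in> R i" and j: "j \<in> I" "p' \<in> R j" by blast
  show "disjnt p p'"
  proof (cases "i = j")
    case True
    then show ?thesis using assms(3)[OF i(1)] i(2) j(2) \<open>p \<noteq> p'\<close>
      unfolding partition_on_def pairwise_def by blast
  next
    case False
    then have "A i \<inter> A j = {}" using assms(2) i(1) j(1) unfolding disjoint_family_on_def by blast
    moreover have "p \<subseteq> A i" "p' \<subseteq> A j" using assms(3) i j unfolding partition_on_def by blast+
    ultimately show ?thesis unfolding disjnt_def by blast
  qed
qed

lemma partition_on_pairs:
  assumes "finite X" "even (card X)"
  shows "\<exists>P. partition_on X P \<and> (\<forall>p\<in>P. card p = 2)"
  using assms
proof (induction "card X" arbitrary: X rule: less_induct)
  case less
  show ?case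
  proof (cases "X = {}")
    case True
    then show ?thesis by (simp add: partition_on_empty)
  next
    case False
    have "card X \<noteq> 0" "card X \<noteq> 1" using False less.prems by auto
    then have "card X \<ge> 2" by linarith
    then obtain Y where "Y \<subseteq> X" "card Y = 2" by (meson obtain_subset_with_card_n)
    then obtain a b where ab: "a \<in> X" "b \<in> X" "a \<noteq> b" by (auto simp: card_2_iff)
    have "card (X - {a, b}) = card X - 2" using ab less.prems(1) by (simp add: card_Diff_subset)
    then obtain P where P: "partition_on (X - {a, b}) P" "\<forall>p\<in>P. card p = 2"
      using less.hyps[of "X - {a, b}"] less.prems \<open>card X \<ge> 2\<close> by auto
    have "partition_on X (insert {a, b} P)"
      using P(1) ab by (subst partition_on_insert) (auto simp: disjnt_def dest: partition_onD1)
    then show ?thesis using P(2) ab(3) by auto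
  qed
qed

definition even_choice :: "'e set \<Rightarrow> ('e \<Rightarrow> 'v set) \<Rightarrow> ('e \<Rightarrow> 'v) \<Rightarrow> bool" where
  "even_choice E inc c \<longleftrightarrow> (\<forall>e\<in>E. c e \<in> inc e) \<and> (\<forall>v. even (card {e \<in> E. c e = v}))"

lemma even_choice_imp_intersecting_pair_partition:
  assumes fin: "finite E" and c: "even_choice E inc c"
  shows "\<exists>P. intersecting_pair_partition E inc P"
proof -
  define fibre where "fibre v = {e \<in> E. c e = v}" for v
  have "\<exists>R. partition_on (fibre v) R \<and> (\<forall>p\<in>R. card p = 2)" for v
    using partition_on_pairs[of "fibre v"] fin c unfolding fibre_def even_choice_def by auto
  then obtain R where R: "\<And>v. partition_on (fibre v) (R v)" "\<And>v p. p \<in> R v \<Longrightarrow> card p = 2" by metis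
  have "partition_on E (\<Union>v. R v)"
    by (rule partition_on_UN[OF _ _ R(1)]) (auto simp: fibre_def disjoint_family_on_def)
  moreover have "\<exists>e e'. p = {e, e'} \<and> e \<noteq> e' \<and> inc e \<inter> inc e' \<noteq> {}" if p: "p \<in> R v" for p v
  proof -
    obtain e e' where "p = {e, e'}" "e \<noteq> e'" using R(2)[OF p] card_2_iff by metis
    moreover have "p \<subseteq> fibre v" using R(1)[of v] p unfolding partition_on_def by blast
    ultimately have "v \<in> inc e \<inter> inc e'" using c unfolding fibre_def even_choice_def by auto
    with \<open>p = {e, e'}\<close> \<open>e \<noteq> e'\<close> show ?thesis by blast
  qed
  ultimately show ?thesis unfolding intersecting_pair_partition_def by blast
qed

lemma intersecting_pair_partition_imp_even_choice:
  assumes P: "intersecting_pair_partition E inc P"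
  shows "\<exists>c. even_choice E inc c"
proof -
  have part: "partition_on E P" and pairs: "\<forall>p\<in>P. \<exists>e e'. p = {e, e'} \<and> e \<noteq> e' \<and> inc e \<inter> inc e' \<noteq> {}"
    using P unfolding intersecting_pair_partition_def by blast+
  have "\<forall>p\<in>P. \<exists>v. \<forall>e\<in>p. v \<in> inc e" using pairs by fastforce
  then obtain common where common: "\<And>p e. p \<in> P \<Longrightarrow> e \<in> p \<Longrightarrow> common p \<in> inc e" by metis
  define block where "block e = (THE p. p \<in> P \<and> e \<in> p)" for e
  have block: "block e = p" if "p \<in> P" "e \<in> p" for p e
    unfolding block_def
  proof (rule the_equality)
    show "\<And>q. q \<in> P \<and> e \<in> q \<Longrightarrow> q = p"
      using part that unfolding partition_on_def pairwise_def disjnt_def by blast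
  qed (use that in blast)
  define c where "c e = common (block e)" for e
  have "c e \<in> inc e" if "e \<in> E" for e
  proof -
    obtain p where "p \<in> P" "e \<in> p" using part \<open>e \<in> E\<close> unfolding partition_on_def by blast
    then show ?thesis using block common unfolding c_def by simp
  qed
  moreover have "even (card {e \<in> E. c e = v})" for v
  proof -
    let ?Q = "{p \<in> P. common p = v}"
    have "{e \<in> E. c e = v} = \<Union>?Q"
      using part block unfolding c_def partition_on_def by auto
    have card2: "card p = 2" if "p \<in> P" for p using pairs that by auto
    have "card (\<Union>?Q) = sum card ?Q"
      by (rule card_Union_disjoint)
        (use part card2 in \<open>auto simp: partition_on_def pairwise_def intro: card_ge_0_finite\<close>)
    also have "\<dots> = (\<Sum>p\<in>?Q. 2)" using card2 by (intro sum.cong) auto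
    finally show ?thesis using \<open>{e \<in> E. c e = v} = \<Union>?Q\<close> by simp
  qed
  ultimately show ?thesis unfolding even_choice_def by blast
qed

lemma even_one_factor_subgraph_iff_even_choice:
  assumes sub: "\<forall>e\<in>E. inc e \<subseteq> V"
  shows "(\<exists>S. even_one_factor_subgraph V E inc S) \<longleftrightarrow> (\<exists>c. even_choice E inc c)"
proof
  assume "\<exists>S. even_one_factor_subgraph V E inc S"
  then obtain S where S: "S \<subseteq> incidence_edges V E inc" "\<forall>v\<in>V. even (card {e. (v, e) \<in> S})"
    "\<forall>e\<in>E. card {v. (v, e) \<in> S} = 1"
    unfolding even_one_factor_subgraph_def by blast
  define c where "c e = (THE v. (v, e) \<in> S)" for e
  have S_iff: "(v, e) \<in> S \<longleftrightarrow> e \<in> E \<and> c e = v" for v e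
  proof (cases "e \<in> E")
    case True
    then obtain u where u: "{v. (v, e) \<in> S} = {u}" using S(3) card_1_singleton_iff by (metis One_nat_def)
    then have "(v, e) \<in> S \<longleftrightarrow> v = u" for v by (simp add: set_eq_iff)
    moreover from this have "c e = u" unfolding c_def by blast
    ultimately show ?thesis using True by auto
  next
    case False
    then show ?thesis using S(1) unfolding incidence_edges_def by blast
  qed
  have "c e \<in> inc e" if "e \<in> E" for e
    using S(1) S_iff[of "c e" e] that unfolding incidence_edges_def by blast
  moreover have "even (card {e \<in> E. c e = v})" for v
  proof (cases "v \<in> V")
    case True
    then show ?thesis using S(2) S_iff by simp
  next
    case False
    then have "{e \<in> E. c e = v} = {}" using S(1) S_iff unfolding incidence_edges_def by blast
    then show ?thesis by (simp only: card.empty dvd_0_right)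
  qed
  ultimately show "\<exists>c. even_choice E inc c" unfolding even_choice_def by blast
next
  assume "\<exists>c. even_choice E inc c"
  then obtain c where c: "\<forall>e\<in>E. c e \<in> inc e" "\<forall>v. even (card {e \<in> E. c e = v})"
    unfolding even_choice_def by blast
  define S where "S = {(c e, e) | e. e \<in> E}"
  have S_iff: "(v, e) \<in> S \<longleftrightarrow> e \<in> E \<and> c e = v" for v e
    unfolding S_def by blast
  have "c e \<in> V" if "e \<in> E" for e using c(1) sub that by blast
  then have "S \<subseteq> incidence_edges V E inc" using c(1) S_iff unfolding incidence_edges_def by auto
  moreover have "\<forall>v\<in>V. even (card {e. (v, e) \<in> S})" using c(2) unfolding S_iff by simp
  moreover have "\<forall>e\<in>E. card {v. (v, e) \<in> S} = 1" unfolding S_iff by simp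
  ultimately show "\<exists>S. even_one_factor_subgraph V E inc S" unfolding even_one_factor_subgraph_def by blast
qed

lemma complement_choice_even_iff:
  assumes "finite E" "\<forall>e\<in>E. c e \<in> inc e \<and> D e = inc e - {c e}" "even (card {e \<in> E. v \<in> inc e})"
  shows "even (card {e \<in> E. c e = v}) \<longleftrightarrow> even (card {e \<in> E. v \<in> D e})"
proof -
  have "{e \<in> E. v \<in> inc e} = {e \<in> E. c e = v} \<union> {e \<in> E. v \<in> D e}" using assms(2) by auto
  moreover have "{e \<in> E. c e = v} \<inter> {e \<in> E. v \<in> D e} = {}" using assms(2) by auto
  ultimately have "card {e \<in> E. v \<in> inc e} = card {e \<in> E. c e = v} + card {e \<in> E. v \<in> D e}"
    using assms(1) by (simp add: card_Un_disjoint)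
  with assms(3) show ?thesis by auto
qed

lemma even_choice_iff_even_pair_selection:
  assumes u3: "uniform3 E inc" and fin: "finite E" and sub: "\<forall>e\<in>E. inc e \<subseteq> V"
    and deg: "\<forall>v\<in>V. even (hdegree E inc v)"
  shows "(\<exists>c. even_choice E inc c) \<longleftrightarrow> (\<exists>D. even_pair_selection E inc D)"
proof -
  have card3: "card (inc e) = 3" "finite (inc e)" if "e \<in> E" for e
    using u3 that unfolding uniform3_def by (auto intro: card_ge_0_finite)
  have deg': "even (card {e \<in> E. v \<in> inc e})" for v
  proof (cases "v \<in> V")
    case True
    then show ?thesis using deg unfolding hdegree_def by blast
  next
    case False
    then have "{e \<in> E. v \<in> inc e} = {}" using sub by blast
    then show ?thesis by (simp only: card.empty dvd_0_right)
  qed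
  show ?thesis
  proof
    assume "\<exists>c. even_choice E inc c"
    then obtain c where c: "\<forall>e\<in>E. c e \<in> inc e" "\<forall>v. even (card {e \<in> E. c e = v})"
      unfolding even_choice_def by blast
    define D where "D e = inc e - {c e}" for e
    have compl: "\<forall>e\<in>E. c e \<in> inc e \<and> D e = inc e - {c e}" using c(1) unfolding D_def by blast
    have "D e \<subseteq> inc e \<and> card (D e) = 2" if "e \<in> E" for e
      using card3[OF that] c(1) that unfolding D_def by auto
    then have "even_pair_selection E inc D"
      using complement_choice_even_iff[OF fin compl deg'] c(2) unfolding even_pair_selection_def by blast
    then show "\<exists>D. even_pair_selection E inc D" by blast
  next
    assume "\<exists>D. even_pair_selection E inc D"
    then obtain D where D: "\<forall>e\<in>E. D e \<subseteq> inc e \<and> card (D e) = 2" "\<forall>v. even (card {e \<in> E. v \<in> D e})"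
      unfolding even_pair_selection_def by blast
    define c where "c e = the_elem (inc e - D e)" for e
    have compl: "\<forall>e\<in>E. c e \<in> inc e \<and> D e = inc e - {c e}"
    proof
      fix e assume "e \<in> E"
      have "D e \<subseteq> inc e" "card (D e) = 2" using D(1) \<open>e \<in> E\<close> by blast+
      then have "card (inc e - D e) = 1" using card3[OF \<open>e \<in> E\<close>] by (simp add: card_Diff_subset finite_subset)
      then obtain u where "inc e - D e = {u}" using card_1_singleton_iff by (metis One_nat_def)
      then show "c e \<in> inc e \<and> D e = inc e - {c e}" using \<open>D e \<subseteq> inc e\<close> unfolding c_def by auto
    qed
    then have "even_choice E inc c"
      using complement_choice_even_iff[OF fin compl deg'] D(2) unfolding even_choice_def by blast
    then show "\<exists>c. even_choice E inc c" by blast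
  qed
qed

theorem theorem2p38:
  fixes V :: "'v set" and E :: "'e set" and inc :: "'e \<Rightarrow> 'v set"
  assumes "hypergraph V E inc"
    and "uniform3 E inc"
    and "\<forall>v\<in>V. even (hdegree E inc v)"
  shows "(quasi_eulerian V E inc \<longleftrightarrow> (\<exists>S. even_one_factor_subgraph V E inc S))
       \<and> ((\<exists>S. even_one_factor_subgraph V E inc S) \<longleftrightarrow> (\<exists>P. intersecting_pair_partition E inc P))"
proof -
  have fin: "finite E" and sub: "\<forall>e\<in>E. inc e \<subseteq> V"
    using assms(1) unfolding hypergraph_def by auto
  have "quasi_eulerian V E inc \<longleftrightarrow> (\<exists>D. even_pair_selection E inc D)"
    using quasi_eulerian_iff_even_pair_selection[OF fin sub] .
  also have "\<dots> \<longleftrightarrow> (\<exists>c. even_choice E inc c)"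
    using even_choice_iff_even_pair_selection[OF assms(2) fin sub assms(3)] by simp
  finally have "quasi_eulerian V E inc \<longleftrightarrow> (\<exists>c. even_choice E inc c)" .
  moreover have "(\<exists>S. even_one_factor_subgraph V E inc S) \<longleftrightarrow> (\<exists>c. even_choice E inc c)"
    using even_one_factor_subgraph_iff_even_choice[OF sub] .
  moreover have "(\<exists>P. intersecting_pair_partition E inc P) \<longleftrightarrow> (\<exists>c. even_choice E inc c)"
    using even_choice_imp_intersecting_pair_partition[OF fin] intersecting_pair_partition_imp_even_choice
    by blast
  ultimately show ?thesis by simp
qed

end
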